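(* Let $v_!:=-\otimes_{k[\Delta_{a,\mathrm{inj}}]}k[\square_{\mathrm{inj}}]$ be left adjoint to $v^\ast$. The unit $\eta_M\colon M\to v^\ast v_!M$ need not induce an isomorphism on $H^a_{-1}$. In fact, for the representable right module $M=k[\Delta_{a,\mathrm{inj}}](-,[0])$ one has $H^a_{-1}(M)=0$, whereas $H^a_{-1}(v^\ast v_!M)\cong k$.
   Context: $k$ is a field; $k[\mathcal C]$ is the $k$-linearization of a small category; right modules over a $k$-linear category are $k$-linear functors from its opposite to $\mathrm{Vect}_k$; for a right module $X$ and $f\colon x\to y$, $X(f)\colon X(y)\to X(x)$. $\Delta_{a,\mathrm{inj}}$: objects $[n]=\{0<\dots<n\}$, $n\ge0$, and $[-1]=\varnothing$, injective order-preserving maps; $\delta^i\colon[n-1]\to[n]$ omits $i$. $\square_{\mathrm{inj}}$: objects $\square_n=\{0,1\}^n$, $n\ge0$, morphisms generated by cofaces $\delta_i^\varepsilon\colon\square_{n-1}\to\square_n$ ($\varepsilon\in\{0,1\}$, $1\le i\le n$) inserting $\varepsilon$ as $i$-th coordinate. The cubical sign embedding $v\colon k[\Delta_{a,\mathrm{inj}}]\to k[\square_{\mathrm{inj}}]$ is $[n]\mapsto\square_{n+1}$, $\delta^i\mapsto\delta^1_{i+1}-\delta^0_{i+1}$; $v^\ast$ is restriction. For a right $k[\Delta_{a,\mathrm{inj}}]$-module $Y$, $H^a_{-1}(Y)=\operatorname{coker}(Y(\delta^0)\colon Y([0])\to Y([-1]))$. *)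

theory Defs
  imports Main
begin

definition fsupp :: "('g \<Rightarrow> 'k::zero) \<Rightarrow> 'g set" where
  "fsupp \<phi> = {x. \<phi> x \<noteq> 0}"

text \<open>The free k-vector space on a set G of generators, inside the ambient space of all functions.\<close>
definition free_on :: "'g set \<Rightarrow> ('g \<Rightarrow> 'k::zero) set" where
  "free_on G = {\<phi>. finite (fsupp \<phi>) \<and> fsupp \<phi> \<subseteq> G}"

definition basis_vec :: "'g \<Rightarrow> 'g \<Rightarrow> 'k::{zero,one}" where
  "basis_vec g = (\<lambda>x. if x = g then 1 else 0)"

definition lspan :: "('g \<Rightarrow> 'k::field) set \<Rightarrow> ('g \<Rightarrow> 'k) set" where
  "lspan S = {\<phi>. \<exists>F c. finite F \<and> F \<subseteq> S \<and> \<phi> = (\<lambda>x. \<Sum>s\<in>F. c s * s x)}"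

text \<open>Object [n] (n >= -1) is encoded by its cardinality n+1 :: nat.
  A morphism [n] -> [m] (injective, order preserving) is encoded by the indicator list
  of its image: a bool list of length m+1 with exactly n+1 entries True.\<close>

definition dmors :: "nat \<Rightarrow> nat \<Rightarrow> bool list set" where
  "dmors c d = {L. length L = d \<and> count_list L True = c}"

text \<open>dcomp g f = g \<circ> f\<close>
fun dcomp :: "bool list \<Rightarrow> bool list \<Rightarrow> bool list" where
  "dcomp [] fs = []"
| "dcomp (True # gs) fs = hd fs # dcomp gs (tl fs)"
| "dcomp (False # gs) fs = False # dcomp gs fs"

text \<open>dcoface n i = delta^i : [n-1] -> [n] (omits i), i.e. cardinality n -> n+1.\<close>
definition dcoface :: "nat \<Rightarrow> nat \<Rightarrow> bool list" where
  "dcoface n i = map (\<lambda>j. j \<noteq> i) [0..<n+1]"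

text \<open>A morphism square_p -> square_q is a list of length q over bool option with exactly p
  entries None: the map fills the None slots (in order) with the input coordinates and the
  slots Some e with the constant e.  These are exactly the composites of cofaces.\<close>

definition cmors :: "nat \<Rightarrow> nat \<Rightarrow> bool option list set" where
  "cmors p q = {b. length b = q \<and> count_list b None = p}"

text \<open>ccomp g f = g \<circ> f\<close>
fun ccomp :: "bool option list \<Rightarrow> bool option list \<Rightarrow> bool option list" where
  "ccomp [] fs = []"
| "ccomp (None # gs) fs = hd fs # ccomp gs (tl fs)"
| "ccomp (Some e # gs) fs = Some e # ccomp gs fs"

text \<open>ccoface n i e = delta_i^e : square_{n-1} -> square_n (1 <= i <= n).\<close>
definition ccoface :: "nat \<Rightarrow> nat \<Rightarrow> bool \<Rightarrow> bool option list" where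
  "ccoface n i e = map (\<lambda>j. if j = i then Some e else None) [1..<n+1]"

text \<open>On objects v [n] = square_{n+1}, i.e. cardinality c maps to square_c.
  On morphisms, v(f) is the k-linear combination (an element of k[square_inj]) obtained by
  composing the v(delta^i) = delta^1_{i+1} - delta^0_{i+1}: for f with omitted positions
  i_1<...<i_r one gets the sum over all ways of inserting constants at the omitted positions,
  with sign (-1)^(number of inserted 0s).\<close>
definition vmor :: "bool list \<Rightarrow> bool option list \<Rightarrow> 'k::field" where
  "vmor L b = (if length b = length L \<and> (\<forall>j<length L. (L!j \<longleftrightarrow> b!j = None))
               then (-1) ^ count_list b (Some False) else 0)"


definition postcomp :: "(bool option list \<Rightarrow> 'k::field) \<Rightarrow> bool option list \<Rightarrow> bool option list \<Rightarrow> 'k" where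
  "postcomp \<psi> \<beta> = (\<lambda>b. \<Sum>\<gamma>\<in>{\<gamma>. \<psi> \<gamma> \<noteq> 0 \<and> ccomp \<gamma> \<beta> = b}. \<psi> \<gamma>)"

definition precomp :: "(bool option list \<Rightarrow> 'k::field) \<Rightarrow> bool option list \<Rightarrow> bool option list \<Rightarrow> 'k" where
  "precomp \<psi> \<beta> = (\<lambda>b. \<Sum>\<gamma>\<in>{\<gamma>. \<psi> \<gamma> \<noteq> 0 \<and> ccomp \<beta> \<gamma> = b}. \<psi> \<gamma>)"

text \<open>A right k[Delta_{a,inj}]-module Y is presented by: for each object (cardinality c) a
  subspace A c of an ambient space of functions, a subspace R c \<subseteq> A c, Y(c) = A c / R c,
  and for each morphism f a linear map act f of the ambient space inducing Y(f).\<close>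

text \<open>H^a_{-1}(Y) = coker(Y(delta^0) : Y([0]) -> Y([-1])) = A 0 / (R 0 + act delta^0 (A 1)).\<close>
definition Hm1 :: "(nat \<Rightarrow> ('g \<Rightarrow> 'k::field) set) \<Rightarrow> (nat \<Rightarrow> ('g \<Rightarrow> 'k) set)
                   \<Rightarrow> (bool list \<Rightarrow> ('g \<Rightarrow> 'k) \<Rightarrow> ('g \<Rightarrow> 'k)) \<Rightarrow> ('g \<Rightarrow> 'k) set \<times> ('g \<Rightarrow> 'k) set" where
  "Hm1 A R act = (A 0, {(\<lambda>x. r x + t x) | r t. r \<in> R 0 \<and> t \<in> act (dcoface 0 0) ` A 1})"

text \<open>A subquotient (A, S) represents the vector space A / S.\<close>
definition sq_zero :: "('g \<Rightarrow> 'k::field) set \<times> ('g \<Rightarrow> 'k) set \<Rightarrow> bool" where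
  "sq_zero Q \<longleftrightarrow> fst Q \<subseteq> snd Q"

definition sq_iso_k :: "('g \<Rightarrow> 'k::field) set \<times> ('g \<Rightarrow> 'k) set \<Rightarrow> bool" where
  "sq_iso_k Q \<longleftrightarrow> (\<exists>w\<in>fst Q. w \<notin> snd Q \<and>
      (\<forall>a\<in>fst Q. \<exists>c. \<exists>s\<in>snd Q. a = (\<lambda>x. s x + c * w x)))"

text \<open>M(c) is free on dmors c d; M(f) is precomposition alpha' \<mapsto> alpha' \<circ> f.\<close>
definition rep_carrier :: "nat \<Rightarrow> nat \<Rightarrow> (bool list \<Rightarrow> 'k::field) set" where
  "rep_carrier d c = free_on (dmors c d)"

definition rep_act :: "bool list \<Rightarrow> (bool list \<Rightarrow> 'k::field) \<Rightarrow> bool list \<Rightarrow> 'k" where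
  "rep_act f \<phi> = (\<lambda>\<alpha>. \<Sum>\<alpha>'\<in>{\<alpha>'. \<phi> \<alpha>' \<noteq> 0 \<and> dcomp \<alpha>' f = \<alpha>}. \<phi> \<alpha>')"

text \<open>(v_! M)(square_p) = (\<Oplus>_c M(c) \<otimes>_k k[square](square_p, v c)) / relations
  M(f)(m) \<otimes> b = m \<otimes> v(f) \<circ> b.  Since M(c) is free on dmors c d, the summand is free on
  pairs (alpha, beta) with alpha \<in> dmors c d, beta \<in> cmors p c; the relations are spanned by
  their instances on basis elements.\<close>
definition vsh_carrier :: "nat \<Rightarrow> nat \<Rightarrow> (bool list \<times> bool option list \<Rightarrow> 'k::field) set" where
  "vsh_carrier d p = free_on {(\<alpha>, \<beta>). \<exists>c. \<alpha> \<in> dmors c d \<and> \<beta> \<in> cmors p c}"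

definition vsh_rel :: "nat \<Rightarrow> nat \<Rightarrow> (bool list \<times> bool option list \<Rightarrow> 'k::field) set" where
  "vsh_rel d p = lspan
     {(\<lambda>x. basis_vec (dcomp \<alpha>' f, \<beta>) x
           - (if fst x = \<alpha>' then postcomp (vmor f) \<beta> (snd x) else 0))
      | f \<alpha>' \<beta> c c'. f \<in> dmors c c' \<and> \<alpha>' \<in> dmors c' d \<and> \<beta> \<in> cmors p c}"

text \<open>(v^* v_! M)(f) = (v_! M)(v f): alpha \<otimes> beta \<mapsto> alpha \<otimes> beta \<circ> v(f).\<close>
definition vsh_act :: "bool list \<Rightarrow> (bool list \<times> bool option list \<Rightarrow> 'k::field)
                       \<Rightarrow> (bool list \<times> bool option list \<Rightarrow> 'k)" where
  "vsh_act f \<phi> = (\<lambda>(a, b). \<Sum>\<beta>\<in>{\<beta>. \<phi> (a, \<beta>) \<noteq> 0}. \<phi> (a, \<beta>) * precomp (vmor f) \<beta> b)"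

end

theory Submission
  imports Defs
begin

(* M([-1]) is spanned by the unique map [-1] -> [0], which is id_[0] composed with delta^0; so
   M(delta^0) is onto and H^a_{-1}(M) = 0.
   In contrast, (v_! M)(square_0) is spanned by p0 = ([-1] -> [0]) (x) id, p1 = id_[0] (x) delta^1_1
   and p2 = id_[0] (x) delta^0_1, subject only to p0 = p1 - p2, which comes from
   v(delta^0) = delta^1_1 - delta^0_1; and the image of delta^0 is spanned by id_[0] (x) v(delta^0)
   = p1 - p2.  The functional "coefficient of p1 plus coefficient of p2" kills both and is 1 on p1,
   while every element is congruent to a multiple of p1, so H^a_{-1}(v^* v_! M) = k. *)

lemma free_on_singleton_eq:
  fixes \<phi> :: "'g \<Rightarrow> 'k::semiring_1"
  assumes "\<phi> \<in> free_on {g}"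
  shows "\<phi> = (\<lambda>x. \<phi> g * basis_vec g x)"
  using assms by (force simp: free_on_def fsupp_def basis_vec_def)

lemma scaled_basis_vec_in_free_on:
  fixes c :: "'k::semiring_1"
  assumes "g \<in> G"
  shows "(\<lambda>x. c * basis_vec g x) \<in> free_on G"
proof -
  have "fsupp (\<lambda>x. c * basis_vec g x) \<subseteq> {g}"
    by (auto simp: fsupp_def basis_vec_def)
  then show ?thesis
    using assms by (auto simp: free_on_def intro: finite_subset)
qed

lemma scaled_in_lspan: "s \<in> S \<Longrightarrow> (\<lambda>x. c * s x) \<in> lspan S"
  unfolding lspan_def by (rule CollectI, rule exI[of _ "{s}"], rule exI[of _ "\<lambda>_. c"]) simp

lemma lspan_in_kernel:
  assumes linear: "\<And>F c. finite F \<Longrightarrow> u (\<lambda>x. \<Sum>s\<in>F. c s * s x) = (\<Sum>s\<in>F. c s * u s)"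
    and vanish: "\<And>s. s \<in> S \<Longrightarrow> u s = 0"
    and "\<phi> \<in> lspan S"
  shows "u \<phi> = 0"
proof -
  obtain F c where "finite F" "F \<subseteq> S" "\<phi> = (\<lambda>x. \<Sum>s\<in>F. c s * s x)"
    using \<open>\<phi> \<in> lspan S\<close> unfolding lspan_def by blast
  then show ?thesis
    using linear vanish by (simp add: subset_iff)
qed

lemma sq_zero_Hm1_if_coface_surj:
  assumes "A 0 \<subseteq> act (dcoface 0 0) ` A 1"
  shows "sq_zero (Hm1 A (\<lambda>_. {\<lambda>_. 0}) act)"
  using assms unfolding sq_zero_def Hm1_def by fastforce

lemma sq_iso_kI:
  assumes "w \<in> fst Q" "u w \<noteq> 0" "\<And>s. s \<in> snd Q \<Longrightarrow> u s = 0"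
    and "\<And>a. a \<in> fst Q \<Longrightarrow> \<exists>s\<in>snd Q. a = (\<lambda>x. s x + u a * w x)"
  shows "sq_iso_k Q"
  using assms unfolding sq_iso_k_def by metis

lemma postcomp_eq_sum:
  assumes "finite G" "\<And>\<gamma>. \<psi> \<gamma> \<noteq> 0 \<Longrightarrow> \<gamma> \<in> G"
  shows "postcomp \<psi> \<beta> b = (\<Sum>\<gamma>\<in>G. if ccomp \<gamma> \<beta> = b then \<psi> \<gamma> else 0)"
proof -
  have "(\<Sum>\<gamma>\<in>G. if ccomp \<gamma> \<beta> = b then \<psi> \<gamma> else 0) = (\<Sum>\<gamma>\<in>{\<gamma>\<in>G. ccomp \<gamma> \<beta> = b}. \<psi> \<gamma>)"
    using assms(1) by (simp add: sum.inter_filter)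
  also have "\<dots> = (\<Sum>\<gamma>\<in>{\<gamma>. \<psi> \<gamma> \<noteq> 0 \<and> ccomp \<gamma> \<beta> = b}. \<psi> \<gamma>)"
    by (rule sum.mono_neutral_right) (use assms in auto)
  finally show ?thesis unfolding postcomp_def by simp
qed

lemma precomp_eq_sum:
  assumes "finite G" "\<And>\<gamma>. \<psi> \<gamma> \<noteq> 0 \<Longrightarrow> \<gamma> \<in> G"
  shows "precomp \<psi> \<beta> b = (\<Sum>\<gamma>\<in>G. if ccomp \<beta> \<gamma> = b then \<psi> \<gamma> else 0)"
proof -
  have "(\<Sum>\<gamma>\<in>G. if ccomp \<beta> \<gamma> = b then \<psi> \<gamma> else 0) = (\<Sum>\<gamma>\<in>{\<gamma>\<in>G. ccomp \<beta> \<gamma> = b}. \<psi> \<gamma>)"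
    using assms(1) by (simp add: sum.inter_filter)
  also have "\<dots> = (\<Sum>\<gamma>\<in>{\<gamma>. \<psi> \<gamma> \<noteq> 0 \<and> ccomp \<beta> \<gamma> = b}. \<psi> \<gamma>)"
    by (rule sum.mono_neutral_right) (use assms in auto)
  finally show ?thesis unfolding precomp_def by simp
qed

lemma vmor_True: "vmor [True] \<gamma> = (if \<gamma> = [None] then 1 else 0)"
  by (auto simp: vmor_def length_Suc_conv)

lemma vmor_False:
  "vmor [False] \<gamma> = (if \<gamma> = [Some True] then 1 else if \<gamma> = [Some False] then -1 else 0)"
  by (auto simp: vmor_def length_Suc_conv)

lemma postcomp_vmor_True:
  assumes "length \<beta> = 1"
  shows "postcomp (vmor [True]) \<beta> b = (if b = \<beta> then 1 else 0)"
  using assms by (subst postcomp_eq_sum[of "{[None]}"]) (auto simp: vmor_True length_Suc_conv split: if_splits)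

lemma postcomp_vmor_False_Nil: "postcomp (vmor [False]) [] b = vmor [False] b"
  by (subst postcomp_eq_sum[of "{[Some True], [Some False]}"]) (auto simp: vmor_False split: if_splits)

lemma precomp_vmor_False_None: "precomp (vmor [False]) [None] b = vmor [False] b"
  by (subst precomp_eq_sum[of "{[Some True], [Some False]}"]) (auto simp: vmor_False split: if_splits)

lemma dmors_0_iff: "\<alpha> \<in> dmors c 0 \<longleftrightarrow> \<alpha> = [] \<and> c = 0"
  by (auto simp: dmors_def)

lemma dmors_1_iff: "\<alpha> \<in> dmors c (Suc 0) \<longleftrightarrow> (\<alpha> = [False] \<and> c = 0) \<or> (\<alpha> = [True] \<and> c = Suc 0)"
  by (cases \<alpha>) (auto simp: dmors_def)

lemma cmors_0_0_iff: "\<beta> \<in> cmors 0 0 \<longleftrightarrow> \<beta> = []"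
  by (auto simp: cmors_def)

lemma cmors_0_1_iff: "\<beta> \<in> cmors 0 (Suc 0) \<longleftrightarrow> \<beta> = [Some True] \<or> \<beta> = [Some False]"
  by (cases \<beta>) (auto simp: cmors_def)

lemma cmors_1_1_iff: "\<beta> \<in> cmors (Suc 0) (Suc 0) \<longleftrightarrow> \<beta> = [None]"
  by (cases \<beta>) (auto simp: cmors_def split: if_splits)

lemma rep_carrier_1_0: "rep_carrier 1 0 = free_on {[False]}"
  unfolding rep_carrier_def by (rule arg_cong[where f = free_on]) (auto simp: dmors_1_iff)

lemma rep_carrier_1_1: "rep_carrier 1 1 = free_on {[True]}"
  unfolding rep_carrier_def by (rule arg_cong[where f = free_on]) (auto simp: dmors_1_iff)

lemma vsh_carrier_1_0:
  "vsh_carrier 1 0 = free_on {([False], []), ([True], [Some True]), ([True], [Some False])}"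
  unfolding vsh_carrier_def
  by (rule arg_cong[where f = free_on]) (auto simp: dmors_1_iff cmors_0_0_iff cmors_0_1_iff)

lemma vsh_carrier_1_1: "vsh_carrier 1 1 = free_on {([True], [None])}"
  unfolding vsh_carrier_def
  by (rule arg_cong[where f = free_on]) (auto simp: dmors_1_iff cmors_1_1_iff, auto simp: cmors_def)

lemma rep_act_scaled_basis_vec:
  "rep_act f (\<lambda>x. c * basis_vec \<alpha> x) = (\<lambda>x. c * basis_vec (dcomp \<alpha> f) x)"
proof
  fix x
  have "{\<alpha>'. c * basis_vec \<alpha> \<alpha>' \<noteq> 0 \<and> dcomp \<alpha>' f = x} = (if c \<noteq> 0 \<and> dcomp \<alpha> f = x then {\<alpha>} else {})"
    by (auto simp: basis_vec_def)
  then show "rep_act f (\<lambda>x. c * basis_vec \<alpha> x) x = c * basis_vec (dcomp \<alpha> f) x"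
    by (auto simp: rep_act_def basis_vec_def)
qed

lemma vsh_act_scaled_basis_vec:
  "vsh_act f (\<lambda>x. c * basis_vec (\<alpha>, \<beta>) x) = (\<lambda>(a, b). if a = \<alpha> then c * precomp (vmor f) \<beta> b else 0)"
proof (intro ext, clarify)
  fix a b
  have "{\<beta>'. c * basis_vec (\<alpha>, \<beta>) (a, \<beta>') \<noteq> 0} = (if c \<noteq> 0 \<and> a = \<alpha> then {\<beta>} else {})"
    by (auto simp: basis_vec_def)
  then show "vsh_act f (\<lambda>x. c * basis_vec (\<alpha>, \<beta>) x) (a, b) = (if a = \<alpha> then c * precomp (vmor f) \<beta> b else 0)"
    by (auto simp: vsh_act_def basis_vec_def)
qed

lemma dcoface_0_0: "dcoface 0 0 = [False]"
  by (simp add: dcoface_def)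

lemma rep_carrier_1_0_subset_coface_image: "rep_carrier 1 0 \<subseteq> rep_act (dcoface 0 0) ` rep_carrier 1 1"
proof
  fix \<phi> :: "bool list \<Rightarrow> 'k::field"
  assume "\<phi> \<in> rep_carrier 1 0"
  then have "\<phi> = (\<lambda>x. \<phi> [False] * basis_vec [False] x)"
    unfolding rep_carrier_1_0 by (rule free_on_singleton_eq)
  also have "\<dots> = rep_act (dcoface 0 0) (\<lambda>x. \<phi> [False] * basis_vec [True] x)"
    by (simp add: rep_act_scaled_basis_vec dcoface_0_0)
  finally show "\<phi> \<in> rep_act (dcoface 0 0) ` rep_carrier 1 1"
    unfolding rep_carrier_1_1 by (auto intro: scaled_basis_vec_in_free_on)
qed

lemma vsh_act_coface_vsh_carrier_1_1:
  assumes "\<phi> \<in> vsh_carrier 1 1"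
  shows "vsh_act (dcoface 0 0) \<phi>
    = (\<lambda>(a, b). if a = [True] then \<phi> ([True], [None]) * vmor [False] b else 0)"
proof -
  have "\<phi> = (\<lambda>x. \<phi> ([True], [None]) * basis_vec ([True], [None]) x)"
    using assms unfolding vsh_carrier_1_1 by (rule free_on_singleton_eq)
  then have "vsh_act (dcoface 0 0) \<phi>
      = vsh_act [False] (\<lambda>x. \<phi> ([True], [None]) * basis_vec ([True], [None]) x)"
    by (simp only: dcoface_0_0 flip: \<open>\<phi> = _\<close>)
  also have "\<dots> = (\<lambda>(a, b). if a = [True] then \<phi> ([True], [None]) * vmor [False] b else 0)"
    by (simp add: vsh_act_scaled_basis_vec precomp_vmor_False_None cong: if_cong)
  finally show ?thesis .
qed

(* The coefficient of p1 plus that of p2: the pair ([True], [Some e]) encodes id_[0] (x) delta^e_1. *)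
definition vertex_sum :: "(bool list \<times> bool option list \<Rightarrow> 'k::field) \<Rightarrow> 'k" where
  "vertex_sum \<phi> = \<phi> ([True], [Some True]) + \<phi> ([True], [Some False])"

lemma vertex_sum_lincomb:
  "vertex_sum (\<lambda>x. \<Sum>s\<in>F. c s * s x) = (\<Sum>s\<in>F. c s * vertex_sum s)"
  by (simp add: vertex_sum_def sum.distrib distrib_left)

lemma vertex_sum_vsh_rel_generator:
  assumes "f \<in> dmors c c'" "\<alpha>' \<in> dmors c' 1" "\<beta> \<in> cmors 0 c"
  shows "vertex_sum (\<lambda>x. basis_vec (dcomp \<alpha>' f, \<beta>) x
           - (if fst x = \<alpha>' then postcomp (vmor f) \<beta> (snd x) else 0)) = 0"
proof -
  consider "\<alpha>' = [False]" "f = []"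
    | "\<alpha>' = [True]" "f = [False]" "\<beta> = []"
    | "\<alpha>' = [True]" "f = [True]" "length \<beta> = 1"
    using assms by (auto simp: dmors_1_iff dmors_0_iff cmors_0_0_iff cmors_0_1_iff)
  then show ?thesis
  proof cases
    case 1
    then show ?thesis by (simp add: vertex_sum_def basis_vec_def)
  next
    case 2
    then show ?thesis by (simp add: vertex_sum_def basis_vec_def postcomp_vmor_False_Nil vmor_False)
  next
    case 3
    then show ?thesis by (simp add: vertex_sum_def basis_vec_def postcomp_vmor_True)
  qed
qed

lemma vertex_sum_vsh_rel:
  assumes "\<phi> \<in> vsh_rel 1 0"
  shows "vertex_sum \<phi> = 0"
  using assms unfolding vsh_rel_def
  by (rule lspan_in_kernel[rotated 2]) (auto simp: vertex_sum_lincomb vertex_sum_vsh_rel_generator)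

lemma vertex_sum_vsh_act_coface:
  assumes "\<phi> \<in> vsh_carrier 1 1"
  shows "vertex_sum (vsh_act (dcoface 0 0) \<phi>) = 0"
  by (simp add: vsh_act_coface_vsh_carrier_1_1[OF assms] vertex_sum_def vmor_False)

lemma vertex_sum_snd_Hm1_vsh:
  assumes "s \<in> snd (Hm1 (vsh_carrier 1) (vsh_rel 1) vsh_act)"
  shows "vertex_sum s = 0"
proof -
  obtain r \<phi> where s: "s = (\<lambda>x. r x + vsh_act (dcoface 0 0) \<phi> x)"
    and r: "r \<in> vsh_rel 1 0" and \<phi>: "\<phi> \<in> vsh_carrier 1 1"
    using assms unfolding Hm1_def by auto
  have "vertex_sum s = vertex_sum r + vertex_sum (vsh_act (dcoface 0 0) \<phi>)"
    by (simp add: s vertex_sum_def)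
  also have "\<dots> = 0"
    by (simp add: vertex_sum_vsh_rel[OF r] vertex_sum_vsh_act_coface[OF \<phi>])
  finally show ?thesis .
qed

lemma vsh_rel_coface_relation:
  "(\<lambda>x. c * (basis_vec ([False], []) x - (if fst x = [True] then vmor [False] (snd x) else 0)))
     \<in> vsh_rel 1 0"
  unfolding vsh_rel_def
proof (rule scaled_in_lspan, intro CollectI exI conjI)
  show "(\<lambda>x. basis_vec ([False], []) x - (if fst x = [True] then vmor [False] (snd x) else 0))
      = (\<lambda>x. basis_vec (dcomp [True] [False], []) x
               - (if fst x = [True] then postcomp (vmor [False]) [] (snd x) else 0))"
    by (simp add: postcomp_vmor_False_Nil cong: if_cong)
  show "[False] \<in> dmors 0 1" "[True] \<in> dmors 1 1" "[] \<in> cmors 0 0"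
    by (simp_all add: dmors_def cmors_def)
qed

lemma vsh_carrier_1_0_decomp:
  fixes a :: "bool list \<times> bool option list \<Rightarrow> 'k::field"
  assumes "a \<in> vsh_carrier 1 0"
  shows "\<exists>s\<in>snd (Hm1 (vsh_carrier 1) (vsh_rel 1) vsh_act).
           a = (\<lambda>x. s x + vertex_sum a * basis_vec ([True], [Some True]) x)"
proof -
  \<comment> \<open>a = a(p0) (p0 - p1 + p2) + (a(p0) - a(p2)) (p1 - p2) + (a(p1) + a(p2)) p1\<close>
  define r :: "bool list \<times> bool option list \<Rightarrow> 'k" where "r = (\<lambda>x. a ([False], [])
      * (basis_vec ([False], []) x - (if fst x = [True] then vmor [False] (snd x) else 0)))"
  define \<phi> :: "bool list \<times> bool option list \<Rightarrow> 'k" where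
    "\<phi> = (\<lambda>x. (a ([False], []) - a ([True], [Some False])) * basis_vec ([True], [None]) x)"
  define t where "t = vsh_act (dcoface 0 0) \<phi>"
  have \<phi>: "\<phi> \<in> vsh_carrier 1 1"
    unfolding \<phi>_def vsh_carrier_1_1 by (auto intro: scaled_basis_vec_in_free_on)
  have "r \<in> vsh_rel 1 0"
    unfolding r_def by (rule vsh_rel_coface_relation)
  moreover have "t \<in> vsh_act (dcoface 0 0) ` vsh_carrier 1 1"
    unfolding t_def using \<phi> by (rule imageI)
  ultimately have rt: "(\<lambda>x. r x + t x) \<in> snd (Hm1 (vsh_carrier 1) (vsh_rel 1) vsh_act)"
    unfolding Hm1_def by auto
  have t_eq: "t = (\<lambda>(u, b). if u = [True]
      then (a ([False], []) - a ([True], [Some False])) * vmor [False] b else 0)"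
    using vsh_act_coface_vsh_carrier_1_1[OF \<phi>] by (simp add: t_def \<phi>_def basis_vec_def cong: if_cong)
  have "a = (\<lambda>x. r x + t x + vertex_sum a * basis_vec ([True], [Some True]) x)"
  proof
    fix x :: "bool list \<times> bool option list"
    have "a x = 0" if "x \<notin> {([False], []), ([True], [Some True]), ([True], [Some False])}"
      using assms that unfolding vsh_carrier_1_0 free_on_def fsupp_def by blast
    then show "a x = r x + t x + vertex_sum a * basis_vec ([True], [Some True]) x"
      by (cases x) (auto simp: r_def t_eq vertex_sum_def basis_vec_def vmor_False algebra_simps)
  qed
  with rt show ?thesis
    by (intro bexI[of _ "\<lambda>x. r x + t x"])
qed

theorem proposition4p6:
  shows "sq_zero (Hm1 (rep_carrier 1) (\<lambda>_. {\<lambda>_ :: bool list. 0 :: 'k::field}) rep_act)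
       \<and> sq_iso_k (Hm1 (vsh_carrier 1) (vsh_rel 1 :: nat \<Rightarrow> (bool list \<times> bool option list \<Rightarrow> 'k) set) vsh_act)"
proof
  show "sq_zero (Hm1 (rep_carrier 1) (\<lambda>_. {\<lambda>_ :: bool list. 0 :: 'k::field}) rep_act)"
    by (rule sq_zero_Hm1_if_coface_surj) (rule rep_carrier_1_0_subset_coface_image)
next
  let ?H = "Hm1 (vsh_carrier 1) (vsh_rel 1 :: nat \<Rightarrow> (_ \<Rightarrow> 'k) set) vsh_act"
  let ?w = "basis_vec ([True], [Some True]) :: bool list \<times> bool option list \<Rightarrow> 'k"
  show "sq_iso_k ?H"
  proof (rule sq_iso_kI[where u = vertex_sum])
    show "?w \<in> fst ?H"
      unfolding Hm1_def fst_conv vsh_carrier_1_0 free_on_def fsupp_def basis_vec_def by auto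
    show "vertex_sum ?w \<noteq> 0"
      by (simp add: vertex_sum_def basis_vec_def)
    show "vertex_sum s = 0" if "s \<in> snd ?H" for s
      using that by (rule vertex_sum_snd_Hm1_vsh)
    show "\<exists>s\<in>snd ?H. a = (\<lambda>x. s x + vertex_sum a * ?w x)" if "a \<in> fst ?H" for a
      using that vsh_carrier_1_0_decomp by (simp only: Hm1_def fst_conv)
  qed
qed

end
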